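(* Let $K$ be a Poisson random variable and let $\mathbf A,\mathbf B$ be random $K\times d$ matrices whose rows are generated as follows: $(\mathbf a_1,\mathbf b_1),(\mathbf a_2,\mathbf b_2),\dots$ is an i.i.d. sequence of pairs of jointly distributed random vectors in $\mathbb R^d\times\mathbb R^d$, independent of $K$, and the $i$-th rows of $\mathbf A,\mathbf B$ are $\mathbf a_i^\top,\mathbf b_i^\top$ for $i\le K$. Then $$\mathbb E[\det(\mathbf A\mathbf B^\top)]=e^{-\mathbb E[K]}\det\big(\mathbf I+\mathbb E[\mathbf B^\top\mathbf A]\big).$$
   Context: $\mathbf A\mathbf B^\top$ is a $K\times K$ matrix; the determinant of a $0\times0$ matrix (when $K=0$) is $1$. All expectations involved are assumed finite. *)

theory Defs
  imports "HOL-Probability.Probability"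
begin

text \<open>Determinant of the n x n matrix with entries f i j (i, j < n), via the Leibniz formula.
  For n = 0 this is the empty product, i.e. 1.\<close>
definition det_nat :: "nat \<Rightarrow> (nat \<Rightarrow> nat \<Rightarrow> real) \<Rightarrow> real" where
  "det_nat n f = (\<Sum>p | p permutes {..<n}. of_int (sign p) * (\<Prod>i<n. f i (p i)))"

end

theory Submission
  imports Defs
begin

text \<open>
  Expanding each inner product coordinatewise and regrouping the Leibniz formula row by row
  writes det (A B^T), given K = k, as a sum of products of functions of single rows. Independence
  and identical distribution of the rows then give E det = \<Sum> det (C (f i) (f j)) over all
  f : {..<k} -> {1..d}, with C = E[a_1 b_1^T]. Non-injective f produce two equal rows, and every
  k-subset T of {1..d} is the image of k! injections, so this is k! times the sum of the principal
  minors of C of size k. Averaging over the independent Poisson count K of mean r gives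
  e^-r \<Sum> r^|T| det C_T over all T, which is e^-r det (I + r C) by the principal-minor expansion
  of det (I + X); the same conditioning on K shows E[B^T A] = r C^T.
\<close>

definition principal_minor :: "('d \<Rightarrow> 'd \<Rightarrow> real) \<Rightarrow> 'd set \<Rightarrow> real" where
  "principal_minor C T = (\<Sum>q | q permutes T. of_int (sign q) * (\<Prod>j\<in>T. C j (q j)))"

lemma bij_betw_map_permutation:
  assumes "bij_betw f A B"
  shows "bij_betw (map_permutation A f) {p. p permutes A} {q. q permutes B}"
proof -
  have "map_permutation A f = (\<lambda>p x. if x \<in> B then f (p (inv_into A f x)) else x)"
    using assms by (auto simp: fun_eq_iff map_permutation_def restrict_id_def bij_betw_def)
  then show ?thesis using bij_betw_permutations[OF assms] by simp
qed

lemma det_nat_reindex_inj: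
  assumes inj: "inj_on f {..<k}"
  shows "det_nat k (\<lambda>i j. C (f i) (f j)) = principal_minor C (f ` {..<k})"
proof -
  let ?q = "map_permutation {..<k} f"
  have "det_nat k (\<lambda>i j. C (f i) (f j))
      = (\<Sum>p | p permutes {..<k}. of_int (sign (?q p)) * (\<Prod>j\<in>f ` {..<k}. C j (?q p j)))"
    unfolding det_nat_def
  proof (rule sum.cong[OF refl])
    fix p assume "p \<in> {p. p permutes {..<k}}"
    then have p: "p permutes {..<k}" by simp
    have "(\<Prod>i<k. C (f i) (f (p i))) = (\<Prod>i<k. C (f i) (?q p (f i)))"
      using inj by (simp add: map_permutation_apply)
    also have "\<dots> = (\<Prod>j\<in>f ` {..<k}. C j (?q p j))"
      using inj by (simp add: prod.reindex)
    finally show "of_int (sign p) * (\<Prod>i<k. C (f i) (f (p i)))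
        = of_int (sign (?q p)) * (\<Prod>j\<in>f ` {..<k}. C j (?q p j))"
      using sign_map_permutation[OF inj p] by simp
  qed
  also have "\<dots> = principal_minor C (f ` {..<k})"
    unfolding principal_minor_def
    using sum.reindex_bij_betw[OF bij_betw_map_permutation[OF inj_on_imp_bij_betw[OF inj]],
        of "\<lambda>q. of_int (sign q) * (\<Prod>j\<in>f ` {..<k}. C j (q j))"]
    by simp
  finally show ?thesis .
qed

lemma det_nat_reindex_not_inj:
  assumes "\<not> inj_on f {..<k}"
  shows "det_nat k (\<lambda>i j. C (f i) (f j)) = 0"
proof -
  obtain i1 i2 where i: "i1 < k" "i2 < k" "i1 \<noteq> i2" "f i1 = f i2"
    using assms unfolding inj_on_def by auto
  define t where "t = Transposition.transpose i1 i2"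
  have t: "t permutes {..<k}" using i unfolding t_def by (simp add: permutes_swap_id)
  have sign_t: "sign t = -1" using i by (simp add: t_def sign_swap_id)
  have ft: "f (t i) = f i" and tt: "t (t i) = i" for i
    using i by (auto simp: t_def Transposition.transpose_def)
  let ?term = "\<lambda>p. of_int (sign p) * (\<Prod>i<k. C (f i) (f (p i)))"
  have "det_nat k (\<lambda>i j. C (f i) (f j)) = (\<Sum>p | p permutes {..<k}. ?term (p \<circ> t))"
    unfolding det_nat_def by (rule sum_permutations_compose_right[OF t])
  also have "\<dots> = (\<Sum>p | p permutes {..<k}. - ?term p)"
  proof (rule sum.cong[OF refl])
    fix p assume "p \<in> {p. p permutes {..<k}}"
    then have "permutation p" by (auto intro: permutes_imp_permutation)
    moreover have "permutation t" using t by (auto intro: permutes_imp_permutation)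
    moreover have "(\<Prod>i<k. C (f i) (f ((p \<circ> t) i))) = (\<Prod>i<k. C (f i) (f (p i)))"
      using prod.permute[OF t, of "\<lambda>i. C (f i) (f ((p \<circ> t) i))"] by (simp add: ft tt)
    ultimately show "?term (p \<circ> t) = - ?term p" by (simp add: sign_compose sign_t)
  qed
  finally show ?thesis unfolding det_nat_def by (simp add: sum_negf)
qed

lemma card_inj_funcset_onto:
  fixes T :: "'d set"
  assumes "finite T" "card T = k"
  shows "card {f \<in> {..<k} \<rightarrow>\<^sub>E UNIV. inj_on f {..<k} \<and> f ` {..<k} = T} = fact k"
proof -
  have "{f \<in> {..<k} \<rightarrow>\<^sub>E UNIV. inj_on f {..<k} \<and> f ` {..<k} = T}
      = {f \<in> {..<k} \<rightarrow>\<^sub>E T. inj_on f {..<k}}"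
  proof (intro equalityI subsetI)
    fix f assume f: "f \<in> {f \<in> {..<k} \<rightarrow>\<^sub>E T. inj_on f {..<k}}"
    then have "card (f ` {..<k}) = card T" using assms by (simp add: card_image)
    then have "f ` {..<k} = T" using f assms by (intro card_subset_eq) (auto simp: PiE_iff)
    then show "f \<in> {f \<in> {..<k} \<rightarrow>\<^sub>E UNIV. inj_on f {..<k} \<and> f ` {..<k} = T}"
      using f by (auto simp: PiE_iff)
  qed (auto simp: PiE_iff)
  then show ?thesis
    using card_inj_on_subset_funcset[of "{..<k}" T "{..<k}"] assms
    by (simp add: fact_prod_rev atLeast0LessThan)
qed

lemma sum_det_nat_reindex:
  fixes C :: "'d::finite \<Rightarrow> 'd \<Rightarrow> real"
  shows "(\<Sum>f \<in> {..<k} \<rightarrow>\<^sub>E UNIV. det_nat k (\<lambda>i j. C (f i) (f j)))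
       = fact k * (\<Sum>T | card T = k. principal_minor C T)"
proof -
  let ?F = "{f \<in> {..<k} \<rightarrow>\<^sub>E (UNIV :: 'd set). inj_on f {..<k}}"
  have fin: "finite ({..<k} \<rightarrow>\<^sub>E (UNIV :: 'd set))" by (simp add: finite_PiE)
  have "(\<Sum>f \<in> {..<k} \<rightarrow>\<^sub>E UNIV. det_nat k (\<lambda>i j. C (f i) (f j)))
      = (\<Sum>f \<in> ?F. principal_minor C (f ` {..<k}))"
  proof -
    have "(\<Sum>f \<in> {..<k} \<rightarrow>\<^sub>E UNIV. det_nat k (\<lambda>i j. C (f i) (f j)))
        = (\<Sum>f \<in> ?F. det_nat k (\<lambda>i j. C (f i) (f j)))"
      by (rule sum.mono_neutral_right[OF fin]) (auto simp: det_nat_reindex_not_inj)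
    then show ?thesis by (simp add: det_nat_reindex_inj)
  qed
  also have "\<dots> = (\<Sum>T | card T = k. \<Sum>f \<in> {f \<in> ?F. f ` {..<k} = T}. principal_minor C (f ` {..<k}))"
  proof (rule sum.group[symmetric])
    show "finite ?F" by (rule finite_subset[OF _ fin]) blast
    show "(\<lambda>f. f ` {..<k}) ` ?F \<subseteq> {T. card T = k}"
      by (intro image_subsetI) (simp add: card_image)
  qed simp
  also have "\<dots> = (\<Sum>T | card T = k. fact k * principal_minor C T)"
  proof (rule sum.cong[OF refl])
    fix T :: "'d set" assume "T \<in> {T. card T = k}"
    then have "card {f \<in> ?F. f ` {..<k} = T} = fact k"
      using card_inj_funcset_onto[of T k] by (simp add: conj_assoc)
    then show "(\<Sum>f \<in> {f \<in> ?F. f ` {..<k} = T}. principal_minor C (f ` {..<k})) = fact k * principal_minor C T"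
      by simp
  qed
  finally show ?thesis by (simp add: sum_distrib_left)
qed

lemma det_nat_inv_permutations:
  "(\<Sum>p | p permutes {..<k}. of_int (sign p) * (\<Prod>i<k. A i (inv p i))) = det_nat k A"
proof -
  have "(\<Sum>p | p permutes {..<k}. of_int (sign p) * (\<Prod>i<k. A i (inv p i)))
      = (\<Sum>p | p permutes {..<k}. of_int (sign (inv p)) * (\<Prod>i<k. A i (inv (inv p) i)))"
    by (rule sum_permutations_inverse)
  also have "\<dots> = det_nat k A"
    unfolding det_nat_def
  proof (rule sum.cong[OF refl])
    fix p assume "p \<in> {p. p permutes {..<k}}"
    then have p: "p permutes {..<k}" by simp
    then have "permutation p" by (auto intro: permutes_imp_permutation)
    then show "of_int (sign (inv p)) * (\<Prod>i<k. A i (inv (inv p) i)) = of_int (sign p) * (\<Prod>i<k. A i (p i))"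
      by (simp add: sign_inverse inv_inv_eq[OF permutes_bij[OF p]])
  qed
  finally show ?thesis .
qed

lemma det_nat_inner_expand:
  fixes x y :: "nat \<Rightarrow> real ^ 'd"
  shows "det_nat k (\<lambda>i j. x i \<bullet> y j) =
    (\<Sum>f \<in> {..<k} \<rightarrow>\<^sub>E UNIV. \<Sum>p | p permutes {..<k}.
       of_int (sign p) * (\<Prod>i<k. x i $ f i * y i $ f (inv p i)))"
proof -
  have "(\<Prod>i<k. x i \<bullet> y (p i)) =
      (\<Sum>f \<in> {..<k} \<rightarrow>\<^sub>E UNIV. \<Prod>i<k. x i $ f i * y i $ f (inv p i))"
    if p: "p permutes {..<k}" for p
  proof -
    have "(\<Prod>i<k. x i \<bullet> y (p i)) = (\<Sum>f \<in> {..<k} \<rightarrow>\<^sub>E UNIV. \<Prod>i<k. x i $ f i * y (p i) $ f i)"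
      unfolding inner_vec_def inner_real_def by (rule prod_sum_PiE) simp_all
    moreover have "(\<Prod>i<k. y (p i) $ f i) = (\<Prod>i<k. y i $ f (inv p i))" for f :: "nat \<Rightarrow> 'd"
      using prod.permute[OF p, of "\<lambda>i. y i $ f (inv p i)"]
      by (simp add: comp_def permutes_inverses(2)[OF p])
    ultimately show ?thesis by (simp add: prod.distrib)
  qed
  then show ?thesis
    unfolding det_nat_def by (simp add: sum_distrib_left sum.swap[of _ "{p. p permutes {..<k}}"])
qed

lemma det_mat_1_plus:
  fixes A :: "real^'n^'n"
  shows "det (mat 1 + A) = (\<Sum>T\<in>Pow UNIV. principal_minor (\<lambda>i j. A$i$j) T)"
proof -
  let ?delta = "\<lambda>p i. if i = p i then 1 else 0 :: real"
  have delta: "(\<Prod>i\<in>B. ?delta p i) = (if \<forall>i\<in>B. p i = i then 1 else 0)" for p :: "'n \<Rightarrow> 'n" and B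
    by (auto intro!: prod_zero) metis
  have "det (mat 1 + A) = (\<Sum>p | p permutes UNIV. of_int (sign p) * (\<Prod>i\<in>UNIV. A$i$(p i) + ?delta p i))"
    unfolding det_def by (simp add: mat_def add.commute)
  also have "\<dots> = (\<Sum>p | p permutes UNIV. \<Sum>T\<in>Pow UNIV.
      of_int (sign p) * ((\<Prod>i\<in>T. A$i$(p i)) * (\<Prod>i\<in>UNIV - T. ?delta p i)))"
    by (simp add: prod_add sum_distrib_left)
  also have "\<dots> = (\<Sum>T\<in>Pow UNIV. \<Sum>p | p permutes UNIV.
      of_int (sign p) * ((\<Prod>i\<in>T. A$i$(p i)) * (\<Prod>i\<in>UNIV - T. ?delta p i)))"
    by (rule sum.swap)
  also have "\<dots> = (\<Sum>T\<in>Pow UNIV. principal_minor (\<lambda>i j. A$i$j) T)"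
  proof (rule sum.cong[OF refl])
    fix T :: "'n set"
    have "{p. p permutes UNIV \<and> (\<forall>i\<in>UNIV - T. p i = i)} = {p. p permutes T}"
      by (auto simp: permutes_def)
    then show "(\<Sum>p | p permutes UNIV.
        of_int (sign p) * ((\<Prod>i\<in>T. A$i$(p i)) * (\<Prod>i\<in>UNIV - T. ?delta p i)))
      = principal_minor (\<lambda>i j. A$i$j) T"
      unfolding principal_minor_def delta
      by (simp add: sum.inter_filter[symmetric] if_distrib cong: if_cong)
  qed
  finally show ?thesis .
qed

lemma principal_minor_scale:
  "principal_minor (\<lambda>i j. r * C i j) T = r ^ card T * principal_minor C T"
  by (simp add: principal_minor_def prod.distrib sum_distrib_left mult.left_commute)

lemma det_mat_1_plus_series:
  fixes C :: "'d::finite \<Rightarrow> 'd \<Rightarrow> real"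
  shows "(\<lambda>k. r ^ k / fact k * (\<Sum>f \<in> {..<k} \<rightarrow>\<^sub>E UNIV. det_nat k (\<lambda>i j. C (f i) (f j))))
     sums det (mat 1 + (\<chi> i j. r * C i j) :: real^'d^'d)"
proof -
  let ?m = "\<lambda>T. principal_minor (\<lambda>i j. r * C i j) (T :: 'd set)"
  have terms: "r ^ k / fact k * (\<Sum>f \<in> {..<k} \<rightarrow>\<^sub>E UNIV. det_nat k (\<lambda>i j. C (f i) (f j)))
      = (\<Sum>T | card T = k. ?m T)" for k
    by (simp add: sum_det_nat_reindex principal_minor_scale sum_distrib_left)
  have card_le: "card T \<le> CARD('d)" for T :: "'d set"
    by (rule card_mono) simp_all
  have "{T :: 'd set. card T = k} = {}" if "k > CARD('d)" for k
    using that card_le by (simp add: set_eq_iff) (meson leD)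
  then have "(\<lambda>k. \<Sum>T | card T = k. ?m T) sums (\<Sum>k\<le>CARD('d). \<Sum>T | card T = k. ?m T)"
    by (intro sums_finite) auto
  also have "(\<Sum>k\<le>CARD('d). \<Sum>T | card T = k. ?m T) = (\<Sum>T\<in>Pow UNIV. ?m T)"
    using sum.group[of "Pow UNIV" "{..CARD('d)}" card ?m] card_le by (simp add: image_subset_iff)
  also have "\<dots> = det (mat 1 + (\<chi> i j. r * C i j) :: real^'d^'d)"
    by (simp add: det_mat_1_plus)
  finally show ?thesis unfolding terms .
qed

lemma det_mat_1_plus_transpose: "det (mat 1 + transpose A) = det (mat 1 + A :: real^'n^'n)"
proof -
  have "transpose (mat 1 + A) = mat 1 + transpose A"
    by (simp add: transpose_def vec_eq_iff mat_def)
  then show ?thesis by (metis det_transpose)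
qed

lemma poisson_mean_sums:
  assumes "rate > 0"
  shows "(\<lambda>k. pmf (poisson_pmf rate) k * real k) sums rate"
proof -
  have "pmf (poisson_pmf rate) (Suc n) * real (Suc n) = rate * exp (- rate) * (rate ^ n / fact n)" for n
    using assms by (simp add: field_simps del: of_nat_Suc)
  moreover have "(\<lambda>n. rate * exp (- rate) * (rate ^ n / fact n)) sums (rate * exp (- rate) * exp rate)"
    using sums_mult[OF exp_converges[of rate]] by (simp add: divide_inverse_commute)
  moreover have "rate * exp (- rate) * exp rate = rate"
    by (simp add: exp_minus field_simps)
  ultimately have "(\<lambda>n. pmf (poisson_pmf rate) (Suc n) * real (Suc n)) sums rate"
    by (simp only:)
  then show ?thesis
    using sums_Suc_iff[of "\<lambda>k. pmf (poisson_pmf rate) k * real k" rate] by (simp del: of_nat_Suc)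
qed

lemma expectation_poisson:
  assumes "rate > 0"
  shows "measure_pmf.expectation (poisson_pmf rate) real = rate"
proof -
  have "(\<integral>\<^sup>+k. ennreal (real k) \<partial>measure_pmf (poisson_pmf rate))
      = (\<Sum>k. ennreal (pmf (poisson_pmf rate) k * real k))"
    by (simp add: nn_integral_measure_pmf nn_integral_count_space_nat ennreal_mult')
  also have "\<dots> = ennreal rate"
    by (rule suminf_ennreal_eq[OF _ poisson_mean_sums[OF assms]]) simp
  finally show ?thesis
    using assms by (simp add: integral_eq_nn_integral)
qed

context prob_space
begin

lemma indep_var_compose_vimage_algebra:
  assumes indep: "indep_set (sets (vimage_algebra (space M) X N1)) (sets (vimage_algebra (space M) Y N2))"
    and X: "random_variable N1 X" and Y: "random_variable N2 Y"
    and f: "f \<in> measurable N1 L" and g: "g \<in> measurable N2 L"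
  shows "indep_var L (\<lambda>\<omega>. f (X \<omega>)) L (\<lambda>\<omega>. g (Y \<omega>))"
proof -
  have "sets (vimage_algebra (space M) (\<lambda>\<omega>. f (X \<omega>)) L) \<subseteq> sets (vimage_algebra (space M) X N1)"
    using measurable_space[OF X]
    by (intro sets_image_in_sets measurable_compose[OF measurable_vimage_algebra1 f]) auto
  moreover have "sets (vimage_algebra (space M) (\<lambda>\<omega>. g (Y \<omega>)) L) \<subseteq> sets (vimage_algebra (space M) Y N2)"
    using measurable_space[OF Y]
    by (intro sets_image_in_sets measurable_compose[OF measurable_vimage_algebra1 g]) auto
  ultimately have "indep_set (sets (vimage_algebra (space M) (\<lambda>\<omega>. f (X \<omega>)) L))
                             (sets (vimage_algebra (space M) (\<lambda>\<omega>. g (Y \<omega>)) L))"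
    using indep unfolding indep_set_def
    by (elim indep_sets_mono_sets) (simp split: bool.split)
  then show ?thesis
    using measurable_compose[OF X f] measurable_compose[OF Y g]
    by (simp add: indep_var_eq sets_vimage_algebra)
qed

lemma indep_var_nn_integral:
  fixes X Y :: "'a \<Rightarrow> ennreal"
  assumes "indep_var borel X borel Y"
  shows "(\<integral>\<^sup>+\<omega>. X \<omega> * Y \<omega> \<partial>M) = (\<integral>\<^sup>+\<omega>. X \<omega> \<partial>M) * (\<integral>\<^sup>+\<omega>. Y \<omega> \<partial>M)"
proof -
  have "(\<lambda>_. borel :: ennreal measure) = case_bool borel borel"
    by (simp add: fun_eq_iff split: bool.split)
  then have "indep_vars (\<lambda>_. borel) (case_bool X Y) UNIV"
    using assms by (simp add: indep_var_def)
  then have "(\<integral>\<^sup>+\<omega>. (\<Prod>i\<in>UNIV. case_bool X Y i \<omega>) \<partial>M) = (\<Prod>i\<in>UNIV. \<integral>\<^sup>+\<omega>. case_bool X Y i \<omega> \<partial>M)"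
    by (intro indep_vars_nn_integral) auto
  then show ?thesis by (simp add: UNIV_bool mult.commute)
qed

lemma expectation_indicator_mult_indep:
  fixes h :: "'c \<Rightarrow> real"
  assumes indep: "indep_set (sets (vimage_algebra (space M) X N1)) (sets (vimage_algebra (space M) Y N2))"
    and X: "random_variable N1 X" and Y: "random_variable N2 Y"
    and A: "A \<in> sets N1" and h: "h \<in> borel_measurable N2" and int: "integrable M (\<lambda>\<omega>. h (Y \<omega>))"
  shows "expectation (\<lambda>\<omega>. indicator A (X \<omega>) * h (Y \<omega>)) = prob (X -` A \<inter> space M) * expectation (\<lambda>\<omega>. h (Y \<omega>))"
proof -
  have event: "X -` A \<inter> space M \<in> events" using measurable_sets[OF X A] .
  have ind: "indicator A (X \<omega>) = (indicator (X -` A \<inter> space M) \<omega> :: real)" if "\<omega> \<in> space M" for \<omega>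
    using that by (simp add: indicator_def)
  have int_ind: "integrable M (\<lambda>\<omega>. indicator A (X \<omega>) :: real)"
    using event by (simp add: Bochner_Integration.integrable_cong[OF refl ind] integrable_indicator_iff emeasure_eq_measure)
  have "expectation (\<lambda>\<omega>. indicator A (X \<omega>) * h (Y \<omega>))
      = expectation (\<lambda>\<omega>. indicator A (X \<omega>)) * expectation (\<lambda>\<omega>. h (Y \<omega>))"
    by (rule indep_var_lebesgue_integral[OF indep_var_compose_vimage_algebra[OF indep X Y _ h] int_ind int])
       (rule borel_measurable_indicator[OF A])
  also have "expectation (\<lambda>\<omega>. indicator A (X \<omega>) :: real) = prob (X -` A \<inter> space M)"
    using event by (simp add: ind cong: Bochner_Integration.integral_cong)
  finally show ?thesis .
qed

lemma integrable_of_indep_indicator: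
  fixes h :: "'c \<Rightarrow> real"
  assumes indep: "indep_set (sets (vimage_algebra (space M) X N1)) (sets (vimage_algebra (space M) Y N2))"
    and X: "random_variable N1 X" and Y: "random_variable N2 Y"
    and A: "A \<in> sets N1" and h: "h \<in> borel_measurable N2" and pos: "prob (X -` A \<inter> space M) \<noteq> 0"
    and int: "integrable M (\<lambda>\<omega>. indicator A (X \<omega>) * h (Y \<omega>))"
  shows "integrable M (\<lambda>\<omega>. h (Y \<omega>))"
proof -
  have event: "X -` A \<inter> space M \<in> events" using measurable_sets[OF X A] .
  have indep': "indep_var borel (\<lambda>\<omega>. ennreal (indicator A (X \<omega>))) borel (\<lambda>\<omega>. ennreal \<bar>h (Y \<omega>)\<bar>)"
    using A h by (intro indep_var_compose_vimage_algebra[OF indep X Y]) simp_all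
  have "(\<integral>\<^sup>+\<omega>. ennreal (indicator A (X \<omega>)) \<partial>M) = (\<integral>\<^sup>+\<omega>. indicator (X -` A \<inter> space M) \<omega> \<partial>M)"
    by (intro nn_integral_cong) (simp add: indicator_def)
  also have "\<dots> = emeasure M (X -` A \<inter> space M)"
    using event by (rule nn_integral_indicator)
  finally have "(\<integral>\<^sup>+\<omega>. ennreal (indicator A (X \<omega>)) \<partial>M) = emeasure M (X -` A \<inter> space M)" .
  then have ind_pos: "(\<integral>\<^sup>+\<omega>. ennreal (indicator A (X \<omega>)) \<partial>M) \<noteq> 0"
    using pos by (simp add: emeasure_eq_measure)
  have "(\<integral>\<^sup>+\<omega>. ennreal (indicator A (X \<omega>)) * ennreal \<bar>h (Y \<omega>)\<bar> \<partial>M)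
      = (\<integral>\<^sup>+\<omega>. ennreal (norm (indicator A (X \<omega>) * h (Y \<omega>))) \<partial>M)"
    by (intro nn_integral_cong) (simp add: indicator_def)
  also have "\<dots> < \<infinity>" using int by (simp add: integrable_iff_bounded)
  finally have "(\<integral>\<^sup>+\<omega>. ennreal (indicator A (X \<omega>)) \<partial>M) * (\<integral>\<^sup>+\<omega>. ennreal \<bar>h (Y \<omega>)\<bar> \<partial>M) < \<infinity>"
    unfolding indep_var_nn_integral[OF indep'] .
  then have "(\<integral>\<^sup>+\<omega>. ennreal \<bar>h (Y \<omega>)\<bar> \<partial>M) < \<infinity>"
    using ind_pos by (auto simp: ennreal_mult_less_top top.not_eq_extremum)
  then show ?thesis
    using measurable_compose[OF Y h] by (intro integrableI_bounded) simp_all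
qed

lemma sums_expectation_indep_nat:
  fixes K :: "'a \<Rightarrow> nat" and h :: "nat \<Rightarrow> 'c \<Rightarrow> real"
  assumes indep: "indep_set (sets (vimage_algebra (space M) K (count_space UNIV))) (sets (vimage_algebra (space M) Y N))"
    and K: "random_variable (count_space UNIV) K" and Y: "random_variable N Y"
    and h: "\<And>k. h k \<in> borel_measurable N" and int: "\<And>k. integrable M (\<lambda>\<omega>. h k (Y \<omega>))"
    and int_K: "integrable M (\<lambda>\<omega>. h (K \<omega>) (Y \<omega>))"
  shows "(\<lambda>k. prob (K -` {k} \<inter> space M) * expectation (\<lambda>\<omega>. h k (Y \<omega>)))
           sums expectation (\<lambda>\<omega>. h (K \<omega>) (Y \<omega>))"
proof -
  define s where "s n \<omega> = (\<Sum>k<n. indicator {k} (K \<omega>) * h k (Y \<omega>))" for n \<omega>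
  have s_eq: "s n \<omega> = (if K \<omega> < n then h (K \<omega>) (Y \<omega>) else 0)" for n \<omega>
    by (simp add: s_def indicator_def sum.delta if_distrib cong: if_cong)
  have "(\<lambda>n. integral\<^sup>L M (s n)) \<longlonglongrightarrow> expectation (\<lambda>\<omega>. h (K \<omega>) (Y \<omega>))"
  proof (rule integral_dominated_convergence[OF _ _ integrable_abs[OF int_K]])
    show "(\<lambda>\<omega>. h (K \<omega>) (Y \<omega>)) \<in> borel_measurable M" using int_K by (rule borel_measurable_integrable)
    show "s n \<in> borel_measurable M" for n
      unfolding s_def
      by (intro borel_measurable_sum borel_measurable_times measurable_compose[OF K] measurable_compose[OF Y h])
         simp
    show "AE \<omega> in M. (\<lambda>n. s n \<omega>) \<longlonglongrightarrow> h (K \<omega>) (Y \<omega>)"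
    proof (rule AE_I2)
      fix \<omega>
      have "eventually (\<lambda>n. s n \<omega> = h (K \<omega>) (Y \<omega>)) sequentially"
        unfolding eventually_sequentially by (auto simp: s_eq intro!: exI[of _ "Suc (K \<omega>)"])
      then show "(\<lambda>n. s n \<omega>) \<longlonglongrightarrow> h (K \<omega>) (Y \<omega>)" by (rule tendsto_eventually)
    qed
    show "AE \<omega> in M. norm (s n \<omega>) \<le> \<bar>h (K \<omega>) (Y \<omega>)\<bar>" for n
      by (simp add: s_eq)
  qed
  moreover have "integral\<^sup>L M (s n) = (\<Sum>k<n. prob (K -` {k} \<inter> space M) * expectation (\<lambda>\<omega>. h k (Y \<omega>)))" for n
  proof -
    have eq: "indicator {k} (K \<omega>) * h k (Y \<omega>) = h k (Y \<omega>) * indicator (K -` {k} \<inter> space M) \<omega>"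
      if "\<omega> \<in> space M" for k \<omega>
      using that by (simp add: indicator_def)
    have int_term: "integrable M (\<lambda>\<omega>. indicator {k} (K \<omega>) * h k (Y \<omega>))" for k
      using measurable_sets[OF K] int
      by (simp add: Bochner_Integration.integrable_cong[OF refl eq] integrable_real_mult_indicator)
    have "integral\<^sup>L M (s n) = (\<Sum>k<n. expectation (\<lambda>\<omega>. indicator {k} (K \<omega>) * h k (Y \<omega>)))"
      unfolding s_def by (rule Bochner_Integration.integral_sum) (rule int_term)
    then show ?thesis by (simp add: expectation_indicator_mult_indep[OF indep K Y _ h int])
  qed
  ultimately show ?thesis unfolding sums_def by simp
qed

end

lemma measurable_fst_component [measurable]:
  "(\<lambda>s :: 'i \<Rightarrow> 'a::topological_space \<times> 'b::topological_space. fst (s i))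
     \<in> borel_measurable (PiM UNIV (\<lambda>_. borel))"
  by (intro measurable_compose[OF measurable_component_singleton] borel_measurable_continuous_onI
      continuous_on_fst continuous_on_id) simp

lemma measurable_snd_component [measurable]:
  "(\<lambda>s :: 'i \<Rightarrow> 'a::topological_space \<times> 'b::topological_space. snd (s i))
     \<in> borel_measurable (PiM UNIV (\<lambda>_. borel))"
  by (intro measurable_compose[OF measurable_component_singleton] borel_measurable_continuous_onI
      continuous_on_snd continuous_on_id) simp

lemma borel_measurable_entry_product [measurable]:
  "(\<lambda>z :: (real^'m) \<times> (real^'n). fst z $ l * snd z $ j) \<in> borel_measurable borel"
  by (intro borel_measurable_continuous_onI continuous_intros)

lemma measurable_component_entry_product [measurable]:
  "(\<lambda>s :: 'i \<Rightarrow> (real^'m) \<times> (real^'n). fst (s i) $ l * snd (s i) $ j)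
     \<in> borel_measurable (PiM UNIV (\<lambda>_. borel))"
  using measurable_compose[OF measurable_component_singleton[of i UNIV "\<lambda>_. borel"]
      borel_measurable_entry_product] by simp

locale poisson_rows = prob_space M for M :: "'w measure" +
  fixes K :: "'w \<Rightarrow> nat" and rate :: real and a b :: "nat \<Rightarrow> 'w \<Rightarrow> real ^ 'd"
  assumes rate_pos: "rate > 0"
    and K_measurable: "K \<in> measurable M (count_space UNIV)"
    and K_distr: "distr M (count_space UNIV) K = measure_pmf (poisson_pmf rate)"
    and row_measurable: "\<And>i. (\<lambda>\<omega>. (a i \<omega>, b i \<omega>)) \<in> borel_measurable M"
    and rows_indep: "indep_vars (\<lambda>_. borel) (\<lambda>i \<omega>. (a i \<omega>, b i \<omega>)) UNIV"
    and rows_distr: "\<And>i. distr M borel (\<lambda>\<omega>. (a i \<omega>, b i \<omega>)) = distr M borel (\<lambda>\<omega>. (a 0 \<omega>, b 0 \<omega>))"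
    and K_indep_rows: "indep_set
           (sets (vimage_algebra (space M) K (count_space UNIV)))
           (sets (vimage_algebra (space M) (\<lambda>\<omega> i. (a i \<omega>, b i \<omega>)) (PiM UNIV (\<lambda>_. borel))))"
    and integrable_det: "integrable M (\<lambda>\<omega>. det_nat (K \<omega>) (\<lambda>i j. a i \<omega> \<bullet> b j \<omega>))"
    and integrable_entry_sum: "\<And>j l. integrable M (\<lambda>\<omega>. \<Sum>i<K \<omega>. b i \<omega> $ j * a i \<omega> $ l)"
begin

definition cross_moment :: "'d \<Rightarrow> 'd \<Rightarrow> real" where
  "cross_moment l j = expectation (\<lambda>\<omega>. a 0 \<omega> $ l * b 0 \<omega> $ j)"

lemma rows_measurable: "(\<lambda>\<omega> i. (a i \<omega>, b i \<omega>)) \<in> measurable M (PiM UNIV (\<lambda>_. borel))"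
  by (rule measurable_PiM_single') (simp_all add: row_measurable)

lemma prob_K_eq: "prob (K -` {k} \<inter> space M) = pmf (poisson_pmf rate) k"
  using K_measurable by (simp add: measure_distr[symmetric] K_distr measure_pmf_single)

lemma expectation_K: "expectation (\<lambda>\<omega>. real (K \<omega>)) = rate"
  using integral_distr[OF K_measurable, of real] expectation_poisson[OF rate_pos] by (simp add: K_distr)

lemma sums_expectation_K_rows:
  assumes "\<And>k. h k \<in> borel_measurable (PiM UNIV (\<lambda>_. borel))"
    and "\<And>k. integrable M (\<lambda>\<omega>. h k (\<lambda>i. (a i \<omega>, b i \<omega>)))"
    and "integrable M (\<lambda>\<omega>. h (K \<omega>) (\<lambda>i. (a i \<omega>, b i \<omega>)))"
  shows "(\<lambda>k. pmf (poisson_pmf rate) k * expectation (\<lambda>\<omega>. h k (\<lambda>i. (a i \<omega>, b i \<omega>))))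
           sums expectation (\<lambda>\<omega>. h (K \<omega>) (\<lambda>i. (a i \<omega>, b i \<omega>)))"
  using sums_expectation_indep_nat[OF K_indep_rows K_measurable rows_measurable, where h = h] assms
  by (simp add: prob_K_eq)

lemma integrable_row_iff:
  fixes h :: "(real^'d) \<times> (real^'d) \<Rightarrow> real"
  assumes "h \<in> borel_measurable borel"
  shows "integrable M (\<lambda>\<omega>. h (a i \<omega>, b i \<omega>)) \<longleftrightarrow> integrable M (\<lambda>\<omega>. h (a 0 \<omega>, b 0 \<omega>))"
  using integrable_distr_eq[OF row_measurable[of i] assms] integrable_distr_eq[OF row_measurable[of 0] assms]
  by (simp add: rows_distr[of i])

lemma expectation_row_eq:
  fixes h :: "(real^'d) \<times> (real^'d) \<Rightarrow> real"
  assumes "h \<in> borel_measurable borel"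
  shows "expectation (\<lambda>\<omega>. h (a i \<omega>, b i \<omega>)) = expectation (\<lambda>\<omega>. h (a 0 \<omega>, b 0 \<omega>))"
  using integral_distr[OF row_measurable[of i] assms] integral_distr[OF row_measurable[of 0] assms]
  by (simp add: rows_distr[of i])

text \<open>Integrability of a single entry product is not assumed; it is inherited from the row sums
  on the event K = 1, which has positive probability and is independent of the rows.\<close>

lemma integrable_cross_entry: "integrable M (\<lambda>\<omega>. a i \<omega> $ l * b i \<omega> $ j)"
proof -
  let ?h = "\<lambda>s :: nat \<Rightarrow> (real^'d) \<times> (real^'d). fst (s 0) $ l * snd (s 0) $ j"
  have eq: "indicator {1} (K \<omega>) * ?h (\<lambda>i. (a i \<omega>, b i \<omega>))
      = (\<Sum>i<K \<omega>. b i \<omega> $ j * a i \<omega> $ l) * indicator (K -` {1} \<inter> space M) \<omega>"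
    if "\<omega> \<in> space M" for \<omega>
    using that by (simp add: indicator_def)
  have "integrable M (\<lambda>\<omega>. (\<Sum>i<K \<omega>. b i \<omega> $ j * a i \<omega> $ l) * indicator (K -` {1} \<inter> space M) \<omega>)"
    using measurable_sets[OF K_measurable] by (intro integrable_real_mult_indicator integrable_entry_sum) simp
  then have "integrable M (\<lambda>\<omega>. indicator {1} (K \<omega>) * ?h (\<lambda>i. (a i \<omega>, b i \<omega>)))"
    by (simp only: Bochner_Integration.integrable_cong[OF refl eq])
  then have "integrable M (\<lambda>\<omega>. ?h (\<lambda>i. (a i \<omega>, b i \<omega>)))"
    using rate_pos
    by (intro integrable_of_indep_indicator[OF K_indep_rows K_measurable rows_measurable])
       (simp_all add: prob_K_eq)
  then show ?thesis
    using integrable_row_iff[of "\<lambda>z. fst z $ l * snd z $ j" i] by simp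
qed

lemma expectation_prod_entries:
  fixes f g :: "nat \<Rightarrow> 'd"
  shows "integrable M (\<lambda>\<omega>. \<Prod>i<k. a i \<omega> $ f i * b i \<omega> $ g i)"
    and "expectation (\<lambda>\<omega>. \<Prod>i<k. a i \<omega> $ f i * b i \<omega> $ g i) = (\<Prod>i<k. cross_moment (f i) (g i))"
proof -
  let ?Y = "\<lambda>i \<omega>. a i \<omega> $ f i * b i \<omega> $ g i"
  have "indep_vars (\<lambda>_. borel) (\<lambda>i \<omega>. (\<lambda>z. fst z $ f i * snd z $ g i) (a i \<omega>, b i \<omega>)) UNIV"
    by (rule indep_vars_compose2[OF rows_indep]) simp
  then have indep: "indep_vars (\<lambda>_. borel) ?Y {..<k}"
    by (auto elim: indep_vars_subset)
  have int: "integrable M (?Y i)" for i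
    using integrable_cross_entry .
  show "integrable M (\<lambda>\<omega>. \<Prod>i<k. ?Y i \<omega>)"
    by (rule indep_vars_integrable[OF _ indep int]) simp
  have "expectation (?Y i) = cross_moment (f i) (g i)" for i
    using expectation_row_eq[of "\<lambda>z. fst z $ f i * snd z $ g i" i] by (simp add: cross_moment_def)
  then show "expectation (\<lambda>\<omega>. \<Prod>i<k. ?Y i \<omega>) = (\<Prod>i<k. cross_moment (f i) (g i))"
    using indep_vars_lebesgue_integral[OF _ indep int] by simp
qed

lemma expectation_det_nat:
  shows "integrable M (\<lambda>\<omega>. det_nat k (\<lambda>i j. a i \<omega> \<bullet> b j \<omega>))"
    and "expectation (\<lambda>\<omega>. det_nat k (\<lambda>i j. a i \<omega> \<bullet> b j \<omega>)) =
      (\<Sum>f \<in> {..<k} \<rightarrow>\<^sub>E UNIV. det_nat k (\<lambda>i j. cross_moment (f i) (f j)))"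
proof -
  note int = expectation_prod_entries(1)[where k = k]
  show "integrable M (\<lambda>\<omega>. det_nat k (\<lambda>i j. a i \<omega> \<bullet> b j \<omega>))"
    unfolding det_nat_inner_expand by (intro Bochner_Integration.integrable_sum integrable_mult_right int)
  show "expectation (\<lambda>\<omega>. det_nat k (\<lambda>i j. a i \<omega> \<bullet> b j \<omega>)) =
      (\<Sum>f \<in> {..<k} \<rightarrow>\<^sub>E UNIV. det_nat k (\<lambda>i j. cross_moment (f i) (f j)))"
    unfolding det_nat_inner_expand
    by (simp add: int Bochner_Integration.integral_sum Bochner_Integration.integrable_sum
        expectation_prod_entries(2) det_nat_inv_permutations[where A = "\<lambda>i j. cross_moment (f i) (f j)" for f])
qed

lemma expectation_det_nat_K:
  "expectation (\<lambda>\<omega>. det_nat (K \<omega>) (\<lambda>i j. a i \<omega> \<bullet> b j \<omega>))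
     = exp (- rate) * det (mat 1 + (\<chi> i j. rate * cross_moment i j) :: real^'d^'d)"
proof -
  let ?h = "\<lambda>k (s :: nat \<Rightarrow> (real^'d) \<times> (real^'d)). det_nat k (\<lambda>i j. fst (s i) \<bullet> snd (s j))"
  have "(\<lambda>k. pmf (poisson_pmf rate) k * expectation (\<lambda>\<omega>. ?h k (\<lambda>i. (a i \<omega>, b i \<omega>))))
      sums expectation (\<lambda>\<omega>. ?h (K \<omega>) (\<lambda>i. (a i \<omega>, b i \<omega>)))"
    using integrable_det expectation_det_nat(1)
    by (intro sums_expectation_K_rows) (simp_all add: det_nat_def)
  moreover have "(\<lambda>k. pmf (poisson_pmf rate) k * expectation (\<lambda>\<omega>. ?h k (\<lambda>i. (a i \<omega>, b i \<omega>))))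
      sums (exp (- rate) * det (mat 1 + (\<chi> i j. rate * cross_moment i j) :: real^'d^'d))"
    using sums_mult[OF det_mat_1_plus_series[of rate cross_moment], of "exp (- rate)"] rate_pos
    by (simp add: expectation_det_nat(2) mult_ac)
  ultimately show ?thesis by (simp add: sums_unique2)
qed

lemma expectation_entry_sum_K:
  "expectation (\<lambda>\<omega>. \<Sum>i<K \<omega>. b i \<omega> $ j * a i \<omega> $ l) = rate * cross_moment l j"
proof -
  let ?h = "\<lambda>k (s :: nat \<Rightarrow> (real^'d) \<times> (real^'d)). \<Sum>i<k. fst (s i) $ l * snd (s i) $ j"
  note int = integrable_cross_entry[of _ l j]
  have "expectation (\<lambda>\<omega>. a i \<omega> $ l * b i \<omega> $ j) = cross_moment l j" for i
    using expectation_row_eq[of "\<lambda>z. fst z $ l * snd z $ j" i] by (simp add: cross_moment_def)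
  then have "expectation (\<lambda>\<omega>. ?h k (\<lambda>i. (a i \<omega>, b i \<omega>))) = real k * cross_moment l j" for k
    by (simp add: Bochner_Integration.integral_sum int)
  moreover have "(\<lambda>k. pmf (poisson_pmf rate) k * expectation (\<lambda>\<omega>. ?h k (\<lambda>i. (a i \<omega>, b i \<omega>))))
      sums expectation (\<lambda>\<omega>. ?h (K \<omega>) (\<lambda>i. (a i \<omega>, b i \<omega>)))"
    using integrable_entry_sum[of j l] int by (intro sums_expectation_K_rows) (simp_all add: mult.commute)
  ultimately have "(\<lambda>k. pmf (poisson_pmf rate) k * real k * cross_moment l j)
      sums expectation (\<lambda>\<omega>. \<Sum>i<K \<omega>. b i \<omega> $ j * a i \<omega> $ l)"
    by (simp add: mult.assoc mult.commute[of "b _ _ $ j"])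
  moreover have "(\<lambda>k. pmf (poisson_pmf rate) k * real k * cross_moment l j) sums (rate * cross_moment l j)"
    by (rule sums_mult2[OF poisson_mean_sums[OF rate_pos]])
  ultimately show ?thesis by (simp add: sums_unique2)
qed

end

theorem lemma6:
  fixes M :: "'w measure" and K :: "'w \<Rightarrow> nat" and rate :: real
    and a b :: "nat \<Rightarrow> 'w \<Rightarrow> real ^ 'd"
  assumes "prob_space M"
    and "rate > 0"
    and "K \<in> measurable M (count_space UNIV)"
    and "distr M (count_space UNIV) K = measure_pmf (poisson_pmf rate)"
    and "\<And>i. (\<lambda>\<omega>. (a i \<omega>, b i \<omega>)) \<in> borel_measurable M"
    and "prob_space.indep_vars M (\<lambda>_. borel) (\<lambda>i \<omega>. (a i \<omega>, b i \<omega>)) UNIV"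
    and "\<And>i. distr M borel (\<lambda>\<omega>. (a i \<omega>, b i \<omega>)) = distr M borel (\<lambda>\<omega>. (a 0 \<omega>, b 0 \<omega>))"
    and "prob_space.indep_set M
           (sets (vimage_algebra (space M) K (count_space UNIV)))
           (sets (vimage_algebra (space M) (\<lambda>\<omega> i. (a i \<omega>, b i \<omega>)) (PiM UNIV (\<lambda>_. borel))))"
    and "integrable M (\<lambda>\<omega>. det_nat (K \<omega>) (\<lambda>i j. a i \<omega> \<bullet> b j \<omega>))"
    and "\<And>j l. integrable M (\<lambda>\<omega>. \<Sum>i<K \<omega>. b i \<omega> $ j * a i \<omega> $ l)"
  shows "prob_space.expectation M (\<lambda>\<omega>. det_nat (K \<omega>) (\<lambda>i j. a i \<omega> \<bullet> b j \<omega>))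
       = exp (- prob_space.expectation M (\<lambda>\<omega>. real (K \<omega>)))
         * det (mat 1 + (\<chi> j l. prob_space.expectation M
                              (\<lambda>\<omega>. \<Sum>i<K \<omega>. b i \<omega> $ j * a i \<omega> $ l)) :: real ^ 'd ^ 'd)"
proof -
  interpret poisson_rows M K rate a b
    unfolding poisson_rows_def poisson_rows_axioms_def using assms by blast
  have "(\<chi> j l. expectation (\<lambda>\<omega>. \<Sum>i<K \<omega>. b i \<omega> $ j * a i \<omega> $ l))
      = transpose (\<chi> l j. rate * cross_moment l j)"
    by (simp add: expectation_entry_sum_K transpose_def vec_eq_iff)
  then show ?thesis
    by (simp add: det_mat_1_plus_transpose expectation_det_nat_K expectation_K)
qed

end
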